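(* In the natural Hopf algebra $\mathcal N_{E^\bullet}=\mathbb K[t_2,t_3,\dots]$ (with $t_1=1$), the antipode satisfies, for every $n\ge2$, $$nS(t_n)=\sum_{k=1}^{n-1}(-1)^k(n+k-1)_k\,B_{n-1,k}(t_2,t_3,\dots)=\Big[\tfrac{x^{n-1}}{(n-1)!}\Big]\Big(1+\sum_{j\ge1}t_{j+1}\tfrac{x^j}{j!}\Big)^{-n},$$ where $(m)_k=m(m-1)\cdots(m-k+1)$. Equivalently, $nS(t_n)=\big[\tfrac{x^{n-1}}{(n-1)!}\big]\big(E^{\bullet I}(x)/x\big)^{-n}$, with $E^{\bullet I}(x)=x+\sum_{n\ge2}nt_n\frac{x^n}{n!}$.
   Context: $E^\bullet$ is the species of pointed sets: $E^\bullet[U]=\{(U,v):v\in U\}$ for $U\ne\emptyset$. It is a set operad with product $\eta(\{(B,v_B)\}_{B\in\pi},(\pi,B_0))=(U,v_{B_0})$, where $B_0\in\pi$ is the distinguished block. Types are identified with the cardinality $n$, with generator $t_n$ and $t_1=1$. The coproduct of the natural Hopf algebra is given by $n\Delta(t_n)=\sum_{k=1}^nB_{n,k}(0,2t_2,3t_3,\dots)\otimes kt_k$, and $S$ is its antipode. $B_{n,k}(x_1,x_2,\dots)=\sum_{\pi\in\Pi[n],|\pi|=k}\prod_{B\in\pi}x_{|B|}$ is the partial Bell polynomial, and $B_{n-1,k}(t_2,t_3,\dots)$ means $B_{n-1,k}(y_1,y_2,\dots)$ with $y_j=t_{j+1}$. $[x^m/m!]f$ denotes $m!$ times the coefficient of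 $x^m$ in $f$. *)

theory Defs
  imports "HOL-Library.Poly_Mapping" "HOL-Library.Product_Plus" "HOL-Library.Disjoint_Sets"
          "HOL-Computational_Algebra.Formal_Power_Series"
begin

text \<open>A polynomial is a finitely supported map from monomials (exponent vectors) to K;
  the variable with index i stands for t_(i+2), so the type is exactly K[t_2,t_3,...].\<close>

type_synonym 'a NE = "(nat \<Rightarrow>\<^sub>0 nat) \<Rightarrow>\<^sub>0 'a"

text \<open>N tensor N, identified with polynomials in two families of variables
  (a monomial is a pair (left monomial, right monomial)).\<close>
type_synonym 'a NE2 = "((nat \<Rightarrow>\<^sub>0 nat) \<times> (nat \<Rightarrow>\<^sub>0 nat)) \<Rightarrow>\<^sub>0 'a"

definition Cst :: "'a::zero \<Rightarrow> ('b::zero \<Rightarrow>\<^sub>0 'a)" where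
  "Cst c = Poly_Mapping.single 0 c"

definition tgen :: "nat \<Rightarrow> 'a::comm_ring_1 NE" where
  "tgen n = (if n = 1 then 1
             else if 2 \<le> n then Poly_Mapping.single (Poly_Mapping.single (n - 2) 1) 1
             else 0)"

definition bell_partial :: "nat \<Rightarrow> nat \<Rightarrow> (nat \<Rightarrow> 'b::comm_semiring_1) \<Rightarrow> 'b" where
  "bell_partial n k x =
     (\<Sum>P\<in>{P. partition_on {1..n} P \<and> card P = k}. \<Prod>B\<in>P. x (card B))"

definition ffall :: "nat \<Rightarrow> nat \<Rightarrow> nat" where
  "ffall m k = (\<Prod>i<k. m - i)"

definition tens :: "'a::comm_ring_1 NE \<Rightarrow> 'a NE \<Rightarrow> 'a NE2" where
  "tens p q = (\<Sum>a\<in>Poly_Mapping.keys p. \<Sum>b\<in>Poly_Mapping.keys q. Poly_Mapping.single (a, b) (Poly_Mapping.lookup p a * Poly_Mapping.lookup q b))"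

definition Delta_gen :: "nat \<Rightarrow> 'a::field_char_0 NE2" where
  "Delta_gen n = Cst (1 / of_nat n) *
     (\<Sum>k = 1..n. tens (bell_partial n k (\<lambda>j. Cst (of_nat j) * tgen j)) (Cst (of_nat k) * tgen k))"

definition Delta :: "'a::field_char_0 NE \<Rightarrow> 'a NE2" where
  "Delta p = (\<Sum>m\<in>Poly_Mapping.keys p. Cst (Poly_Mapping.lookup p m) * (\<Prod>i\<in>Poly_Mapping.keys m. Delta_gen (i + 2) ^ Poly_Mapping.lookup m i))"

definition counit :: "'a::zero NE \<Rightarrow> 'a" where
  "counit p = Poly_Mapping.lookup p 0"

text \<open>mu \<circ> (S \<otimes> T) applied to an element of N \<otimes> N (for linear S, T).\<close>
definition conv_app :: "('a::comm_ring_1 NE \<Rightarrow> 'a NE) \<Rightarrow> ('a NE \<Rightarrow> 'a NE) \<Rightarrow> 'a NE2 \<Rightarrow> 'a NE" where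
  "conv_app S T q = (\<Sum>ab\<in>Poly_Mapping.keys q. Cst (Poly_Mapping.lookup q ab) * S (Poly_Mapping.single (fst ab) 1)
                                    * T (Poly_Mapping.single (snd ab) 1))"

definition is_linear_NE :: "('a::comm_ring_1 NE \<Rightarrow> 'a NE) \<Rightarrow> bool" where
  "is_linear_NE S \<longleftrightarrow> (\<forall>p. S p = (\<Sum>m\<in>Poly_Mapping.keys p. Cst (Poly_Mapping.lookup p m) * S (Poly_Mapping.single m 1)))"

definition is_antipode :: "('a::field_char_0 NE \<Rightarrow> 'a NE) \<Rightarrow> bool" where
  "is_antipode S \<longleftrightarrow> is_linear_NE S
     \<and> (\<forall>p. conv_app S id (Delta p) = Cst (counit p))
     \<and> (\<forall>p. conv_app id S (Delta p) = Cst (counit p))"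

definition Fser :: "'a::field_char_0 NE fps" where
  "Fser = Abs_fps (\<lambda>j. if j = 0 then 1 else Cst (1 / fact j) * tgen (j + 1))"

definition EI :: "'a::field_char_0 NE fps" where
  "EI = Abs_fps (\<lambda>m. if m = 1 then 1 else if 2 \<le> m then Cst (of_nat m / fact m) * tgen m else 0)"

end

theory Submission
  imports Defs
begin

text \<open>Since \<open>\<Delta>(t\<^sub>m)\<close> is given by partial Bell polynomials, the antipode identity
  \<open>\<mu>(id \<otimes> S)\<Delta>(t\<^sub>m) = 0\<close> (\<open>m \<ge> 2\<close>) says, via the exponential formula
  \<open>n! [x\<^sup>n] (\<Sum>\<^sub>j x\<^sub>j x\<^sup>j/j!)\<^sup>k = k! B\<^sub>n\<^sub>,\<^sub>k(x)\<close>, that \<open>\<Sum>\<^sub>k k S(t\<^sub>k) x\<^sup>k/k!\<close> is the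
  compositional inverse of \<open>E\<^sup>\<bullet>\<^sup>I(x)\<close>. Lagrange inversion then gives
  \<open>n S(t\<^sub>n) = (n-1)! [x\<^sup>n\<^sup>-\<^sup>1] (E\<^sup>\<bullet>\<^sup>I(x)/x)\<^sup>-\<^sup>n\<close>, and \<open>E\<^sup>\<bullet>\<^sup>I(x)/x = 1 + u\<close> with
  \<open>u = \<Sum>\<^sub>j\<^sub>\<ge>\<^sub>1 t\<^sub>j\<^sub>+\<^sub>1 x\<^sup>j/j!\<close>; expanding \<open>(1 + u)\<^sup>-\<^sup>n\<close> by the negative binomial series
  and using the exponential formula once more yields the Bell polynomial sum.\<close>

section \<open>Partial Bell polynomials of finite sets\<close>

definition bell_partial_on :: "'c set \<Rightarrow> nat \<Rightarrow> (nat \<Rightarrow> 'b::comm_semiring_1) \<Rightarrow> 'b" where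
  "bell_partial_on A k x = (\<Sum>P\<in>{P. partition_on A P \<and> card P = k}. \<Prod>B\<in>P. x (card B))"

lemma bell_partial_eq_bell_partial_on: "bell_partial n k x = bell_partial_on {1..n} k x"
  by (simp add: bell_partial_def bell_partial_on_def)

lemma inj_image_partition_on:
  assumes P: "partition_on A P" and h: "inj_on h A"
  shows "partition_on (h ` A) ((`) h ` P)" and "card ((`) h ` P) = card P"
    and "(\<Prod>B\<in>(`) h ` P. x (card B)) = (\<Prod>B\<in>P. x (card B))"
proof -
  have sub: "B \<subseteq> A" if "B \<in> P" for B using P partition_onD1 that by blast
  have "{} \<notin> (`) h ` P" using partition_onD3[OF P] by auto
  then show "partition_on (h ` A) ((`) h ` P)"
    using partition_on_inj_image[OF P h] by simp
  have inj: "inj_on ((`) h) P"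
    by (rule inj_on_subset[OF inj_on_image_Pow[OF h]]) (use sub in auto)
  then show "card ((`) h ` P) = card P" by (rule card_image)
  have "card (h ` B) = card B" if "B \<in> P" for B
    using card_image inj_on_subset[OF h sub[OF that]] by blast
  then show "(\<Prod>B\<in>(`) h ` P. x (card B)) = (\<Prod>B\<in>P. x (card B))"
    by (simp add: prod.reindex[OF inj])
qed

lemma bell_partial_on_inj_image:
  assumes h: "inj_on h A"
  shows "bell_partial_on (h ` A) k x = bell_partial_on A k x"
proof -
  let ?g = "inv_into A h"
  have g: "inj_on ?g (h ` A)" "?g ` h ` A = A"
    using h by (simp_all add: inj_on_inv_into)
  have "bell_partial_on A k x = bell_partial_on (h ` A) k x"
    unfolding bell_partial_on_def
  proof (rule sum.reindex_bij_witness[where j = "(`) ((`) h)" and i = "(`) ((`) ?g)"])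
    fix P assume "P \<in> {P. partition_on A P \<and> card P = k}"
    then have P: "partition_on A P" "card P = k" by auto
    have "?g ` h ` B = B" if "B \<in> P" for B
    proof -
      have "B \<subseteq> A" using partition_onD1[OF P(1)] that by blast
      then show ?thesis using h by simp
    qed
    then show "(`) ?g ` (`) h ` P = P" by (simp add: image_image)
    show "(`) h ` P \<in> {P. partition_on (h ` A) P \<and> card P = k}"
      using inj_image_partition_on[OF P(1) h] P(2) by auto
    show "(\<Prod>B\<in>(`) h ` P. x (card B)) = (\<Prod>B\<in>P. x (card B))"
      by (rule inj_image_partition_on[OF P(1) h])
  next
    fix Q assume "Q \<in> {Q. partition_on (h ` A) Q \<and> card Q = k}"
    then have Q: "partition_on (h ` A) Q" "card Q = k" by auto
    have "h ` ?g ` B = B" if "B \<in> Q" for B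
      using partition_onD1[OF Q(1)] that by (intro image_inv_into_cancel) auto
    then show "(`) h ` (`) ?g ` Q = Q" by (simp add: image_image)
    show "(`) ?g ` Q \<in> {P. partition_on A P \<and> card P = k}"
      using inj_image_partition_on[OF Q(1) g(1)] g(2) Q(2) by auto
  qed
  then show ?thesis by simp
qed

lemma bell_partial_on_card:
  assumes "finite A"
  shows "bell_partial_on A k x = bell_partial (card A) k x"
proof -
  obtain h where "bij_betw h A {1..card A}"
    using assms finite_same_card_bij[of A "{1..card A}"] by auto
  then have "inj_on h A" "h ` A = {1..card A}" by (auto simp: bij_betw_def)
  then show ?thesis by (metis bell_partial_eq_bell_partial_on bell_partial_on_inj_image)
qed

lemma partition_on_insert_block:
  assumes "a \<notin> A" "T \<subseteq> A" "partition_on (A - T) Q"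
  shows "partition_on (insert a A) (insert (insert a T) Q)" and "insert a T \<notin> Q"
proof -
  have "a \<notin> \<Union>Q" using partition_onD1[OF assms(3)] assms(1) by auto
  then have "disjnt (insert a T) (\<Union>Q)"
    using partition_onD1[OF assms(3)] by (auto simp: disjnt_def)
  moreover have "insert a A - insert a T = A - T" using assms(1) by auto
  ultimately show "partition_on (insert a A) (insert (insert a T) Q)"
    by (subst partition_on_insert) (use assms(2,3) in auto)
  show "insert a T \<notin> Q" using \<open>a \<notin> \<Union>Q\<close> by auto
qed

lemma partition_on_insert_obtain_block:
  assumes P: "partition_on (insert a A) P" and a: "a \<notin> A"
  obtains T Q where "T \<subseteq> A" "partition_on (A - T) Q" "P = insert (insert a T) Q"
proof -
  obtain B where B: "B \<in> P" "a \<in> B" using partition_onD1[OF P] by blast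
  have dj: "disjnt B (\<Union>(P - {B}))"
    using disjointD[OF partition_onD2[OF P] B(1)] by (auto simp: disjnt_def)
  have PB: "P = insert B (P - {B})" using B(1) by auto
  then have "partition_on (insert a A) (insert B (P - {B}))" using P by simp
  then have "partition_on (insert a A - B) (P - {B})" "B \<subseteq> insert a A"
    unfolding partition_on_insert[OF dj] by auto
  moreover have "insert a A - B = A - (B - {a})" using a B(2) by auto
  moreover have "insert a (B - {a}) = B" using B(2) by auto
  ultimately show ?thesis using that[of "B - {a}" "P - {B}"] PB a by auto
qed

lemma insert_block_eq_iff:
  assumes "a \<notin> \<Union>Q" "a \<notin> \<Union>Q'" "a \<notin> T" "a \<notin> T'"
  shows "insert (insert a T) Q = insert (insert a T') Q' \<longleftrightarrow> T = T' \<and> Q = Q'"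
proof
  assume eq: "insert (insert a T) Q = insert (insert a T') Q'"
  have notin: "insert a T \<notin> Q" "insert a T' \<notin> Q'" using assms(1,2) by auto
  have "insert a T \<in> insert (insert a T') Q'" by (simp flip: eq)
  moreover have "insert a T \<notin> Q'" using assms(2) by auto
  ultimately have block: "insert a T = insert a T'" by simp
  then have "T = T'" using assms(3,4) by (metis Diff_insert_absorb)
  moreover have "Q = Q'" using eq notin block by (metis Diff_insert_absorb)
  ultimately show "T = T' \<and> Q = Q'" ..
qed simp

lemma bij_betw_insert_block:
  assumes fin: "finite A" and a: "a \<notin> A"
  shows "bij_betw (\<lambda>(T, Q). insert (insert a T) Q)
           (SIGMA T:Pow A. {Q. partition_on (A - T) Q \<and> card Q = k})
           {P. partition_on (insert a A) P \<and> card P = Suc k}"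
    (is "bij_betw ?join ?S ?P")
proof -
  have finQ: "finite Q" if "(T, Q) \<in> ?S" for T Q
    using that finite_elements[of "A - T" Q] fin by auto
  have aQ: "a \<notin> \<Union>Q" "a \<notin> T" if "(T, Q) \<in> ?S" for T Q
    using that partition_onD1[of "A - T" Q] a by auto
  show ?thesis
  proof (rule bij_betw_imageI)
    show "inj_on ?join ?S"
    proof (rule inj_onI)
      fix TQ TQ' assume S: "TQ \<in> ?S" "TQ' \<in> ?S" and eq: "?join TQ = ?join TQ'"
      obtain T Q T' Q' where TQ: "TQ = (T, Q)" "TQ' = (T', Q')" by fastforce
      show "TQ = TQ'"
        using eq insert_block_eq_iff[OF aQ(1)[OF S(1)[unfolded TQ]] aQ(1)[OF S(2)[unfolded TQ]]
            aQ(2)[OF S(1)[unfolded TQ]] aQ(2)[OF S(2)[unfolded TQ]]]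
        by (simp add: TQ)
    qed
    show "?join ` ?S = ?P"
    proof (rule subset_antisym)
      show "?join ` ?S \<subseteq> ?P"
      proof (rule image_subsetI)
        fix TQ assume S: "TQ \<in> ?S"
        obtain T Q where TQ: "TQ = (T, Q)" by fastforce
        have T: "T \<subseteq> A" "partition_on (A - T) Q" "card Q = k" using S by (auto simp: TQ)
        have "card (insert (insert a T) Q) = Suc k"
          using finQ[OF S[unfolded TQ]] partition_on_insert_block(2)[OF a T(1,2)] T(3) by simp
        then show "?join TQ \<in> ?P"
          using partition_on_insert_block(1)[OF a T(1,2)] by (simp add: TQ)
      qed
      show "?P \<subseteq> ?join ` ?S"
      proof
        fix P assume "P \<in> ?P"
        then have P: "partition_on (insert a A) P" "card P = Suc k" by auto
        then obtain T Q where TQ: "T \<subseteq> A" "partition_on (A - T) Q" "P = insert (insert a T) Q"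
          using partition_on_insert_obtain_block[OF _ a] by metis
        have "finite Q" using finite_elements[OF _ TQ(2)] fin by auto
        then have "card Q = k"
          using P(2) TQ partition_on_insert_block(2)[OF a TQ(1,2)] by auto
        then show "P \<in> ?join ` ?S" using TQ by (intro image_eqI[of _ _ "(T, Q)"]) auto
      qed
    qed
  qed
qed

lemma bell_partial_on_insert:
  assumes fin: "finite A" and a: "a \<notin> A"
  shows "bell_partial_on (insert a A) (Suc k) x
           = (\<Sum>T\<in>Pow A. x (Suc (card T)) * bell_partial_on (A - T) k x)"
proof -
  let ?parts = "\<lambda>A k. {Q. partition_on A Q \<and> card Q = k}"
  let ?S = "Sigma (Pow A) (\<lambda>T. ?parts (A - T) k)"
  let ?join = "\<lambda>(T, Q). insert (insert a T) Q"
  have finQ: "finite Q" if "(T, Q) \<in> ?S" for T Q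
    using that finite_elements[of "A - T" Q] fin by auto
  have aQ: "a \<notin> \<Union>Q" "a \<notin> T" if "(T, Q) \<in> ?S" for T Q
    using that partition_onD1[of "A - T" Q] a by auto
  have "(\<Sum>T\<in>Pow A. x (Suc (card T)) * bell_partial_on (A - T) k x)
      = (\<Sum>(T, Q)\<in>?S. x (Suc (card T)) * (\<Prod>B\<in>Q. x (card B)))"
  proof -
    have "finite (?parts (A - T) k)" for T
      using finitely_many_partition_on[of "A - T"] fin by (auto intro: finite_subset)
    then show ?thesis
      unfolding bell_partial_on_def sum_distrib_left using fin by (intro sum.Sigma) auto
  qed
  also have "\<dots> = (\<Sum>TQ\<in>?S. \<Prod>B\<in>?join TQ. x (card B))"
  proof (rule sum.cong[OF refl])
    fix TQ assume S: "TQ \<in> ?S"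
    obtain T Q where TQ: "TQ = (T, Q)" by fastforce
    have TQS: "(T, Q) \<in> ?S" using S by (simp add: TQ)
    have "finite T" using TQS fin finite_subset by auto
    then have "card (insert a T) = Suc (card T)" using aQ(2)[OF TQS] by simp
    moreover have "insert a T \<notin> Q" using aQ(1)[OF TQS] by auto
    ultimately have "x (Suc (card T)) * (\<Prod>B\<in>Q. x (card B)) = (\<Prod>B\<in>?join (T, Q). x (card B))"
      using finQ[OF TQS] by simp
    then show "(\<lambda>(T, Q). x (Suc (card T)) * (\<Prod>B\<in>Q. x (card B))) TQ
        = (\<Prod>B\<in>?join TQ. x (card B))"
      by (simp add: TQ)
  qed
  also have "\<dots> = bell_partial_on (insert a A) (Suc k) x"
    unfolding bell_partial_on_def by (rule sum.reindex_bij_betw[OF bij_betw_insert_block[OF fin a]])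
  finally show ?thesis ..
qed

lemma sum_Pow_card:
  assumes "finite A"
  shows "(\<Sum>T\<in>Pow A. g (card T)) = (\<Sum>i\<le>card A. of_nat (card A choose i) * g i)"
proof -
  have Pow: "Pow A = (\<Union>i\<le>card A. {T. T \<subseteq> A \<and> card T = i})"
    using assms by (auto intro: card_mono)
  have "(\<Sum>T\<in>Pow A. g (card T)) = (\<Sum>i\<le>card A. \<Sum>T\<in>{T. T \<subseteq> A \<and> card T = i}. g (card T))"
    unfolding Pow using assms by (subst sum.UNION_disjoint) auto
  also have "\<dots> = (\<Sum>i\<le>card A. of_nat (card A choose i) * g i)"
    using assms by (intro sum.cong refl) (simp add: n_subsets)
  finally show ?thesis .
qed

lemma bell_partial_Suc_Suc:
  "bell_partial (Suc n) (Suc k) x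
     = (\<Sum>i\<le>n. of_nat (n choose i) * x (Suc i) * bell_partial (n - i) k x)"
proof -
  have "bell_partial (Suc n) (Suc k) x = bell_partial_on (insert (Suc n) {1..n}) (Suc k) x"
    by (simp add: bell_partial_eq_bell_partial_on atLeastAtMostSuc_conv)
  also have "\<dots> = (\<Sum>T\<in>Pow {1..n}. x (Suc (card T)) * bell_partial_on ({1..n} - T) k x)"
    by (rule bell_partial_on_insert) auto
  also have "\<dots> = (\<Sum>T\<in>Pow {1..n}. x (Suc (card T)) * bell_partial (n - card T) k x)"
    by (intro sum.cong refl) (auto simp: bell_partial_on_card card_Diff_subset finite_subset)
  also have "\<dots> = (\<Sum>i\<le>n. of_nat (n choose i) * x (Suc i) * bell_partial (n - i) k x)"
    using sum_Pow_card[of "{1..n}" "\<lambda>c. x (Suc c) * bell_partial (n - c) k x"]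
    by (simp add: mult.assoc)
  finally show ?thesis .
qed

lemma bell_partial_0_left: "bell_partial 0 k x = (if k = 0 then 1 else 0)"
proof -
  have "{P. partition_on {1..0::nat} P \<and> card P = k} = (if k = 0 then {{}} else {})"
    by (auto simp: partition_on_empty)
  then show ?thesis by (simp add: bell_partial_def)
qed

lemma card_partition_on_le:
  assumes "finite A" "partition_on A P"
  shows "card P \<le> card A"
proof -
  have fin: "finite B" "B \<noteq> {}" if "B \<in> P" for B
    using assms partition_onD1 partition_onD3 that by (auto intro: finite_subset)
  have "card P = (\<Sum>B\<in>P. 1)" by simp
  also have "\<dots> \<le> (\<Sum>B\<in>P. card B)"
    by (rule sum_mono) (use fin in \<open>auto simp: Suc_le_eq card_gt_0_iff\<close>)
  also have "\<dots> = card A"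
    using card_Union_disjoint[of P] partition_onD1[OF assms(2)] partition_onD2[OF assms(2)] fin
    by (simp add: disjoint_def pairwise_def disjnt_def)
  finally show ?thesis .
qed

lemma bell_partial_eq_0:
  assumes "n < k"
  shows "bell_partial n k x = 0"
proof -
  have "{P. partition_on {1..n} P \<and> card P = k} = {}"
    using assms card_partition_on_le[of "{1..n}"] by fastforce
  then show ?thesis unfolding bell_partial_def by (simp only: sum.empty)
qed

lemma bell_partial_0_right:
  assumes "0 < n"
  shows "bell_partial n 0 x = 0"
proof -
  have "{P. partition_on {1..n} P \<and> card P = 0} = {}"
    using assms partition_onD1[of "{1..n}"] finite_elements[of "{1..n}"] by fastforce
  then show ?thesis unfolding bell_partial_def by (simp only: sum.empty)
qed

section \<open>Formal power series and truncated Lagrange inversion\<close>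

lemma fact_mult_fps_mult_nth:
  fixes A B :: "'b::comm_ring_1 fps"
  shows "of_nat (fact m) * fps_nth (A * B) m
    = (\<Sum>i=0..m. of_nat (m choose i) * (of_nat (fact i) * fps_nth A i)
                 * (of_nat (fact (m - i)) * fps_nth B (m - i)))"
proof -
  have "of_nat (fact m) * (fps_nth A i * fps_nth B (m - i))
      = of_nat (m choose i) * (of_nat (fact i) * fps_nth A i) * (of_nat (fact (m - i)) * fps_nth B (m - i))"
    if "i \<le> m" for i
  proof -
    have "fact m = (m choose i) * fact i * fact (m - i)"
      using binomial_fact_lemma[OF that] by (simp add: mult_ac)
    then have "(of_nat (fact m) :: 'b) = of_nat (m choose i) * of_nat (fact i) * of_nat (fact (m - i))"
      by (metis of_nat_mult)
    then show ?thesis by (simp add: mult_ac)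
  qed
  then show ?thesis unfolding fps_mult_nth sum_distrib_left by (intro sum.cong) auto
qed

lemma fact_mult_fps_nth_Suc:
  fixes F :: "'b::comm_ring_1 fps"
  shows "of_nat (fact (Suc m)) * fps_nth F (Suc m) = of_nat (fact m) * fps_nth (fps_deriv F) m"
  by (simp add: fps_deriv_nth algebra_simps)

lemma fps_deriv_of_inverse:
  fixes V F :: "'b::comm_ring_1 fps"
  assumes VF: "V * F = 1"
  shows "fps_deriv V = - (V ^ 2 * fps_deriv F)"
proof -
  have "V * fps_deriv F + fps_deriv V * F = 0"
    using arg_cong[OF VF, of fps_deriv] by simp
  then have F: "fps_deriv V * F = - (V * fps_deriv F)"
    by (simp add: eq_neg_iff_add_eq_0 add.commute)
  have "fps_deriv V = fps_deriv V * (V * F)" by (simp add: VF)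
  also have "\<dots> = V * (fps_deriv V * F)" by (simp only: mult_ac)
  finally show ?thesis by (simp add: F power2_eq_square mult.assoc)
qed

text \<open>The residue of \<open>E'/E\<^sup>j\<^sup>+\<^sup>1\<close> vanishes for \<open>j \<noteq> 0\<close>, since for \<open>j \<noteq> 0\<close> this series
  is the derivative of \<open>-E\<^sup>-\<^sup>j/j\<close>.\<close>

lemma inverse_power_mult_deriv_nth:
  fixes V F E :: "'b::{idom, ring_char_0} fps"
  assumes VF: "V * F = 1" and EF: "E = F * fps_X"
  shows "fps_nth (V ^ Suc j * fps_deriv E) j = (if j = 0 then 1 else 0)"
proof -
  have "fps_deriv E = F + fps_X * fps_deriv F" by (simp add: EF mult.commute)
  then have "V ^ Suc j * fps_deriv E = V ^ Suc j * F + fps_X * (V ^ Suc j * fps_deriv F)"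
    by (simp add: distrib_left mult.left_commute)
  also have "V ^ Suc j * F = V ^ j" using VF by (simp add: mult.assoc mult.left_commute)
  finally have "fps_nth (V ^ Suc j * fps_deriv E) j
      = fps_nth (V ^ j) j + fps_nth (fps_X * (V ^ Suc j * fps_deriv F)) j"
    by (simp only: fps_add_nth)
  then have coeff: "fps_nth (V ^ Suc j * fps_deriv E) j
      = fps_nth (V ^ j) j + (if j = 0 then 0 else fps_nth (V ^ Suc j * fps_deriv F) (j - 1))"
    by (simp only: fps_X_mult_nth)
  show ?thesis
  proof (cases j)
    case 0
    then show ?thesis using coeff by simp
  next
    case (Suc i)
    have "fps_deriv (V ^ j) = fps_const (of_nat j) * fps_deriv V * V ^ i"
      by (simp only: fps_deriv_power Suc diff_Suc_1)
    also have "\<dots> = - (fps_const (of_nat j) * (V ^ Suc j * fps_deriv F))"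
      by (simp only: fps_deriv_of_inverse[OF VF] Suc power_Suc power2_eq_square) (simp add: mult_ac)
    finally have "fps_nth (fps_deriv (V ^ j)) i
        = fps_nth (- (fps_const (of_nat j) * (V ^ Suc j * fps_deriv F))) i"
      by (rule arg_cong)
    then have "of_nat j * fps_nth (V ^ j) j = - (of_nat j * fps_nth (V ^ Suc j * fps_deriv F) i)"
      by (simp only: fps_deriv_nth fps_neg_nth fps_mult_left_const_nth Suc Suc_eq_plus1)
    then have "of_nat j * (fps_nth (V ^ j) j + fps_nth (V ^ Suc j * fps_deriv F) i) = 0"
      by (simp add: distrib_left)
    moreover have "(of_nat j :: 'b) \<noteq> 0" by (simp add: Suc del: of_nat_Suc)
    ultimately have "fps_nth (V ^ j) j + fps_nth (V ^ Suc j * fps_deriv F) i = 0" by simp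
    then show ?thesis using Suc coeff by simp
  qed
qed

lemma inverse_power_mult_deriv_power_nth:
  fixes V F E :: "'b::{idom, ring_char_0} fps"
  assumes VF: "V * F = 1" and EF: "E = F * fps_X" and k: "1 \<le> k" "k \<le> n"
  shows "fps_nth (V ^ n * (fps_deriv E * E ^ (k - 1))) (n - 1) = (if k = n then 1 else 0)"
proof -
  have "n = Suc (n - k) + (k - 1)" using k by simp
  then have pow: "V ^ n = V ^ Suc (n - k) * V ^ (k - 1)" by (metis power_add)
  have VE: "V ^ (k - 1) * E ^ (k - 1) = fps_X ^ (k - 1)"
    using VF by (simp add: EF mult.assoc[symmetric] flip: power_mult_distrib)
  have "V ^ n * (fps_deriv E * E ^ (k - 1))
      = (V ^ (k - 1) * E ^ (k - 1)) * (V ^ Suc (n - k) * fps_deriv E)"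
    by (simp only: pow mult_ac)
  also have "\<dots> = fps_X ^ (k - 1) * (V ^ Suc (n - k) * fps_deriv E)"
    by (simp only: VE)
  finally have eq: "V ^ n * (fps_deriv E * E ^ (k - 1)) = fps_X ^ (k - 1) * (V ^ Suc (n - k) * fps_deriv E)" .
  have "fps_nth (V ^ n * (fps_deriv E * E ^ (k - 1))) (n - 1)
      = fps_nth (V ^ Suc (n - k) * fps_deriv E) (n - k)"
    unfolding eq fps_X_power_mult_nth using k by (simp add: diff_diff_left)
  also have "\<dots> = (if k = n then 1 else 0)"
    using inverse_power_mult_deriv_nth[OF VF EF, of "n - k"] k by auto
  finally show ?thesis .
qed

text \<open>With \<open>V = x/E\<close>, Lagrange inversion \<open>n c\<^sub>n = [x\<^sup>n\<^sup>-\<^sup>1] V\<^sup>n\<close> only needs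
  \<open>\<Sum>\<^sub>k c\<^sub>k E\<^sup>k = x\<close> up to order \<open>n\<close>.\<close>

lemma lagrange_inversion_truncated:
  fixes V F E :: "'b::{idom, ring_char_0} fps" and c :: "nat \<Rightarrow> 'b"
  assumes VF: "V * F = 1" and EF: "E = F * fps_X" and n: "1 \<le> n"
    and comp: "\<And>m. m \<le> n \<Longrightarrow> fps_nth (\<Sum>k=0..n. fps_const (c k) * E ^ k) m = (if m = 1 then 1 else 0)"
  shows "of_nat n * c n = fps_nth (V ^ n) (n - 1)"
proof -
  define T where "T = (\<Sum>k=0..n. fps_const (c k) * E ^ k)"
  have T_Suc: "fps_nth T (Suc j) = (if j = 0 then 1 else 0)" if "j < n" for j
    using comp[of "Suc j"] that by (simp add: T_def)
  have "fps_nth (V ^ n) (n - 1) = (\<Sum>i=0..n-1. if i = n - 1 then fps_nth (V ^ n) i else 0)"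
    by simp
  also have "\<dots> = fps_nth (V ^ n * fps_deriv T) (n - 1)"
    unfolding fps_mult_nth by (rule sum.cong) (use n in \<open>auto simp: fps_deriv_nth T_Suc\<close>)
  also have "fps_deriv T = (\<Sum>k=0..n. fps_const (c k * of_nat k) * (fps_deriv E * E ^ (k - 1)))"
    by (simp add: T_def fps_deriv_sum fps_deriv_power mult.assoc) (simp add: mult.assoc[symmetric])
  also have "fps_nth (V ^ n * \<dots>) (n - 1)
      = (\<Sum>k=0..n. c k * of_nat k * fps_nth (V ^ n * (fps_deriv E * E ^ (k - 1))) (n - 1))"
    by (simp add: sum_distrib_left fps_sum_nth mult.left_commute[of "V ^ n"])
  also have "\<dots> = (\<Sum>k=0..n. if k = n then c n * of_nat n else 0)"
  proof (rule sum.cong[OF refl])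
    fix k assume "k \<in> {0..n}"
    then show "c k * of_nat k * fps_nth (V ^ n * (fps_deriv E * E ^ (k - 1))) (n - 1)
        = (if k = n then c n * of_nat n else 0)"
      using inverse_power_mult_deriv_power_nth[OF VF EF, of k n] n by (cases "k = 0") auto
  qed
  finally show ?thesis by (simp add: mult.commute)
qed

definition neg_binomial_fps :: "nat \<Rightarrow> 'a::comm_ring_1 fps" where
  "neg_binomial_fps n = Abs_fps (\<lambda>k. (-1) ^ k * of_nat ((n + k - 1) choose k))"

lemma neg_binomial_fps_Suc_mult: "neg_binomial_fps (Suc n) * (1 + fps_X) = neg_binomial_fps n"
proof (rule fps_ext)
  fix k
  show "fps_nth (neg_binomial_fps (Suc n) * (1 + fps_X)) k = fps_nth (neg_binomial_fps n) k"
  proof (cases k)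
    case 0
    then show ?thesis by (simp add: neg_binomial_fps_def distrib_left)
  next
    case (Suc j)
    have "of_nat (Suc (n + j) choose Suc j) - of_nat (n + j choose j) = (of_nat (n + j choose Suc j) :: 'a)"
      by (simp add: binomial_Suc_Suc)
    then show ?thesis
      by (simp add: neg_binomial_fps_def distrib_left Suc algebra_simps)
  qed
qed

lemma neg_binomial_fps_mult_power: "neg_binomial_fps n * (1 + fps_X) ^ n = (1 :: 'a::comm_ring_1 fps)"
proof (induction n)
  case 0
  show ?case
    by (rule fps_ext) (simp add: neg_binomial_fps_def binomial_eq_0)
next
  case (Suc n)
  have "(neg_binomial_fps (Suc n) :: 'a fps) * (1 + fps_X) ^ Suc n
      = (neg_binomial_fps (Suc n) * (1 + fps_X)) * (1 + fps_X) ^ n"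
    by (simp only: power_Suc mult.assoc)
  also have "\<dots> = neg_binomial_fps n * (1 + fps_X) ^ n"
    by (simp only: neg_binomial_fps_Suc_mult)
  finally show ?case using Suc.IH by simp
qed

lemma neg_binomial_fps_compose_mult_power:
  fixes u :: "'a::idom fps"
  assumes "fps_nth u 0 = 0"
  shows "(neg_binomial_fps n oo u) * (1 + u) ^ n = 1"
proof -
  have "(1 + fps_X) oo u = 1 + u"
    using assms by (simp add: fps_compose_add_distrib fps_X_fps_compose_startby0)
  then have "(1 + u) ^ n = (1 + fps_X) ^ n oo u"
    using fps_compose_power[OF assms, of "1 + fps_X" n] by simp
  then have "(neg_binomial_fps n oo u) * (1 + u) ^ n = (neg_binomial_fps n * (1 + fps_X) ^ n) oo u"
    by (simp add: fps_compose_mult_distrib[OF assms])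
  then show ?thesis by (simp add: neg_binomial_fps_mult_power)
qed

lemma binomial_mult_fact_eq_ffall: "(m choose i) * fact i = ffall m i"
proof (induction m arbitrary: i)
  case 0
  then show ?case by (cases i) (auto simp: ffall_def lessThan_Suc_eq_insert_0)
next
  case (Suc m)
  show ?case
  proof (cases i)
    case 0
    then show ?thesis by (simp add: ffall_def)
  next
    case (Suc j)
    have "(Suc m choose Suc j) * fact (Suc j) = ((Suc m choose Suc j) * Suc j) * fact j"
      by (simp add: algebra_simps)
    also have "\<dots> = Suc m * ((m choose j) * fact j)"
      by (simp only: Suc_times_binomial_eq[symmetric])
    also have "\<dots> = ffall (Suc m) (Suc j)"
      unfolding Suc.IH ffall_def prod.lessThan_Suc_shift by simp
    finally show ?thesis using Suc by simp
  qed
qed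

lemma power_inverse_root:
  fixes G F :: "'a::comm_monoid_mult"
  assumes GF: "G * F ^ n = 1" and n: "0 < n"
  obtains V where "V * F = 1" and "V ^ n = G"
proof
  define V where "V = G * F ^ (n - 1)"
  have "F ^ n = F ^ (n - 1) * F" using n by (simp flip: power_Suc2)
  then show VF: "V * F = 1" using GF by (simp add: V_def mult.assoc)
  have "V ^ n = V ^ n * (G * F ^ n)" by (simp add: GF)
  also have "\<dots> = G * (V * F) ^ n" by (simp add: power_mult_distrib mult_ac)
  finally show "V ^ n = G" by (simp add: VF)
qed

section \<open>Exponential generating functions\<close>

text \<open>\<open>K[t\<^sub>2,t\<^sub>3,\<dots>]\<close> is not a field, so exponential generating functions over it need the
  inverses of the factorials as explicit data.\<close>

locale factorials_invertible =
  fixes inv_fact :: "nat \<Rightarrow> 'b::{idom, ring_char_0}"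
  assumes inv_fact_mult_fact: "inv_fact m * of_nat (fact m) = 1"
begin

definition egf :: "(nat \<Rightarrow> 'b) \<Rightarrow> 'b fps" where
  "egf x = Abs_fps (\<lambda>j. if j = 0 then 0 else inv_fact j * x j)"

lemma inv_fact_1: "inv_fact 1 = 1"
  using inv_fact_mult_fact[of 1] by simp

lemma inv_fact_Suc: "inv_fact (Suc j) * of_nat (Suc j) = inv_fact j"
proof -
  have "inv_fact (Suc j) * of_nat (Suc j)
      = (inv_fact (Suc j) * of_nat (Suc j)) * (inv_fact j * of_nat (fact j))"
    by (simp only: inv_fact_mult_fact mult_1_right)
  also have "\<dots> = inv_fact j * (inv_fact (Suc j) * (of_nat (Suc j) * of_nat (fact j)))"
    by (simp only: mult_ac)
  also have "of_nat (Suc j) * of_nat (fact j) = (of_nat (fact (Suc j)) :: 'b)"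
    by (simp only: fact_Suc of_nat_id of_nat_mult)
  finally show ?thesis by (simp only: inv_fact_mult_fact mult_1_right)
qed

lemma fact_mult_fps_deriv_egf_nth: "of_nat (fact i) * fps_nth (fps_deriv (egf x)) i = x (Suc i)"
proof -
  have "of_nat (fact i) * fps_nth (fps_deriv (egf x)) i
      = (inv_fact (Suc i) * of_nat (fact (Suc i))) * x (Suc i)"
    by (simp add: egf_def fps_deriv_nth algebra_simps)
  then show ?thesis by (simp only: inv_fact_mult_fact mult_1_left)
qed

lemma fact_mult_egf_power_nth:
  "of_nat (fact n) * fps_nth (egf x ^ k) n = of_nat (fact k) * bell_partial n k x"
proof (induction k arbitrary: n)
  case 0
  then show ?case by (cases n) (simp_all add: bell_partial_0_left bell_partial_0_right)
next
  case (Suc k)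
  show ?case
  proof (cases n)
    case 0
    then show ?thesis by (simp add: bell_partial_0_left egf_def)
  next
    case (Suc m)
    have "of_nat (fact (Suc m)) * fps_nth (egf x ^ Suc k) (Suc m)
        = of_nat (fact m) * fps_nth (fps_deriv (egf x ^ Suc k)) m"
      by (rule fact_mult_fps_nth_Suc)
    also have "fps_deriv (egf x ^ Suc k) = fps_const (of_nat (Suc k)) * (fps_deriv (egf x) * egf x ^ k)"
      by (simp only: fps_deriv_power diff_Suc_1 mult.assoc)
    also have "of_nat (fact m) * fps_nth (fps_const (of_nat (Suc k)) * (fps_deriv (egf x) * egf x ^ k)) m
        = of_nat (Suc k) * (of_nat (fact m) * fps_nth (fps_deriv (egf x) * egf x ^ k) m)"
      by (simp only: fps_mult_left_const_nth mult.left_commute)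
    also have "of_nat (fact m) * fps_nth (fps_deriv (egf x) * egf x ^ k) m
        = (\<Sum>i=0..m. of_nat (m choose i) * x (Suc i) * (of_nat (fact k) * bell_partial (m - i) k x))"
      by (simp only: fact_mult_fps_mult_nth fact_mult_fps_deriv_egf_nth Suc.IH)
    also have "of_nat (Suc k) * \<dots> = of_nat (fact (Suc k)) * bell_partial (Suc m) (Suc k) x"
      by (simp add: bell_partial_Suc_Suc sum_distrib_left atLeast0AtMost algebra_simps)
    finally show ?thesis using Suc by simp
  qed
qed

lemma fps_shift_egf_of_nat_mult:
  "fps_shift 1 (egf (\<lambda>j. of_nat j * t j)) = fps_const (t 1) + egf (\<lambda>j. t (j + 1))"
proof (rule fps_ext)
  fix j
  show "fps_nth (fps_shift 1 (egf (\<lambda>j. of_nat j * t j))) j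
      = fps_nth (fps_const (t 1) + egf (\<lambda>j. t (j + 1))) j"
  proof (cases j)
    case 0
    then show ?thesis using inv_fact_1 by (simp add: egf_def)
  next
    case (Suc i)
    have "inv_fact (Suc j) * (of_nat (Suc j) * t (Suc j)) = inv_fact j * t (Suc j)"
      by (simp only: mult.assoc[symmetric] inv_fact_Suc)
    then show ?thesis using Suc by (simp add: egf_def)
  qed
qed

text \<open>The recurrence says that \<open>\<Sum>\<^sub>k k s\<^sub>k x\<^sup>k/k!\<close> is the compositional inverse of
  \<open>\<Sum>\<^sub>j j t\<^sub>j x\<^sup>j/j!\<close>, up to the order \<open>n\<close> considered.\<close>

lemma egf_compose_truncated:
  assumes t1: "t 1 = 1" and s1: "s 1 = 1"
    and recurrence: "\<And>m. 2 \<le> m \<Longrightarrow> (\<Sum>k=1..m. bell_partial m k (\<lambda>j. of_nat j * t j) * of_nat k * s k) = 0"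
    and mn: "m \<le> n"
  shows "fps_nth (\<Sum>k=0..n. fps_const (inv_fact k * of_nat k * s k) * egf (\<lambda>j. of_nat j * t j) ^ k) m
       = (if m = 1 then 1 else 0)"
proof -
  define f where "f = (\<lambda>j. of_nat j * t j)"
  have "of_nat (fact m) * fps_nth (\<Sum>k=0..n. fps_const (inv_fact k * of_nat k * s k) * egf f ^ k) m
      = (\<Sum>k=0..n. inv_fact k * of_nat k * s k * (of_nat (fact m) * fps_nth (egf f ^ k) m))"
    by (simp add: fps_sum_nth sum_distrib_left algebra_simps)
  also have "\<dots> = (\<Sum>k=0..n. bell_partial m k f * of_nat k * s k)"
  proof (rule sum.cong[OF refl])
    fix k
    have "inv_fact k * of_nat k * s k * (of_nat (fact m) * fps_nth (egf f ^ k) m)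
        = (inv_fact k * of_nat (fact k)) * (bell_partial m k f * of_nat k * s k)"
      by (simp only: fact_mult_egf_power_nth mult_ac)
    then show "inv_fact k * of_nat k * s k * (of_nat (fact m) * fps_nth (egf f ^ k) m)
        = bell_partial m k f * of_nat k * s k"
      by (simp only: inv_fact_mult_fact mult_1_left)
  qed
  also have "\<dots> = (\<Sum>k=1..m. bell_partial m k f * of_nat k * s k)"
    using mn by (intro sum.mono_neutral_right) (auto simp: bell_partial_eq_0)
  also have "\<dots> = of_nat (fact m) * (if m = 1 then 1 else 0)"
  proof -
    consider "m = 0" | "m = 1" | "2 \<le> m" by linarith
    then show ?thesis
    proof cases
      case 2
      then show ?thesis
        using bell_partial_Suc_Suc[of 0 0 f] t1 s1 by (simp add: f_def bell_partial_0_left)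
    qed (use recurrence[of m] in \<open>simp_all add: f_def\<close>)
  qed
  finally show ?thesis by (simp add: f_def)
qed

lemma lagrange_inversion_egf:
  assumes t1: "t 1 = 1" and s1: "s 1 = 1"
    and recurrence: "\<And>m. 2 \<le> m \<Longrightarrow> (\<Sum>k=1..m. bell_partial m k (\<lambda>j. of_nat j * t j) * of_nat k * s k) = 0"
    and V: "V * fps_shift 1 (egf (\<lambda>j. of_nat j * t j)) = 1" and n: "1 \<le> n"
  shows "of_nat n * s n = of_nat (fact (n - 1)) * fps_nth (V ^ n) (n - 1)"
proof -
  let ?E = "egf (\<lambda>j. of_nat j * t j)"
  have EF: "?E = fps_shift 1 ?E * fps_X"
    by (rule fps_ext) (simp add: egf_def)
  have lagrange: "of_nat n * (inv_fact n * of_nat n * s n) = fps_nth (V ^ n) (n - 1)"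
    by (rule lagrange_inversion_truncated[OF V EF n egf_compose_truncated[OF t1 s1 recurrence]])
  have "(of_nat (fact n) :: 'b) = of_nat n * of_nat (fact (n - 1))"
    using n by (simp add: fact_reduce)
  then have fact_n: "of_nat (fact (n - 1)) * (of_nat n * inv_fact n) = 1"
    using inv_fact_mult_fact[of n] by (simp add: mult_ac)
  have "of_nat (fact (n - 1)) * fps_nth (V ^ n) (n - 1)
      = (of_nat (fact (n - 1)) * (of_nat n * inv_fact n)) * (of_nat n * s n)"
    by (simp only: lagrange[symmetric] mult_ac)
  also have "\<dots> = of_nat n * s n" by (simp only: fact_n mult_1_left)
  finally show ?thesis by (rule sym)
qed

lemma fact_mult_neg_binomial_compose_egf_nth:
  assumes "1 \<le> m"
  shows "of_nat (fact m) * fps_nth (neg_binomial_fps n oo egf x) m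
      = (\<Sum>k=1..m. (-1) ^ k * of_nat (ffall (n + k - 1) k) * bell_partial m k x)"
proof -
  have "of_nat (fact m) * fps_nth (neg_binomial_fps n oo egf x) m
      = (\<Sum>k=0..m. (-1) ^ k * of_nat ((n + k - 1) choose k) * (of_nat (fact m) * fps_nth (egf x ^ k) m))"
    by (simp add: fps_compose_nth sum_distrib_left neg_binomial_fps_def algebra_simps)
  also have "\<dots> = (\<Sum>k=0..m. (-1) ^ k * of_nat (ffall (n + k - 1) k) * bell_partial m k x)"
  proof (rule sum.cong[OF refl])
    fix k
    have "(-1) ^ k * of_nat ((n + k - 1) choose k) * (of_nat (fact m) * fps_nth (egf x ^ k) m)
        = (-1) ^ k * of_nat (((n + k - 1) choose k) * fact k) * bell_partial m k x"
      by (simp only: fact_mult_egf_power_nth of_nat_mult mult_ac)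
    then show "(-1) ^ k * of_nat ((n + k - 1) choose k) * (of_nat (fact m) * fps_nth (egf x ^ k) m)
        = (-1) ^ k * of_nat (ffall (n + k - 1) k) * bell_partial m k x"
      by (simp only: binomial_mult_fact_eq_ffall)
  qed
  also have "\<dots> = (\<Sum>k=1..m. (-1) ^ k * of_nat (ffall (n + k - 1) k) * bell_partial m k x)"
    using assms by (simp add: sum.atLeast_Suc_atMost bell_partial_0_right)
  finally show ?thesis .
qed

end

section \<open>The natural Hopf algebra of pointed sets\<close>

lemma Cst_mult: "Cst a * Cst b = (Cst (a * b) :: ('m::monoid_add \<Rightarrow>\<^sub>0 'a::comm_ring_1))"
  by (simp add: Cst_def mult_single)

lemma Cst_add: "Cst (a + b) = (Cst a + Cst b :: ('m::monoid_add \<Rightarrow>\<^sub>0 'a::comm_ring_1))"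
  by (simp add: Cst_def single_add)

lemma Cst_0 [simp]: "Cst 0 = 0"
  by (simp add: Cst_def)

lemma single_eq_0_iff: "Poly_Mapping.single k v = 0 \<longleftrightarrow> v = 0"
  by (metis lookup_single_eq lookup_zero single_zero)

lemma Cst_eq_0_iff: "Cst c = 0 \<longleftrightarrow> c = 0"
  by (simp add: Cst_def single_eq_0_iff)

lemma Cst_1 [simp]: "Cst 1 = (1 :: ('m::monoid_add \<Rightarrow>\<^sub>0 'a::comm_ring_1))"
  by (simp add: Cst_def)

lemma Cst_of_nat: "Cst (of_nat k) = (of_nat k :: ('m::monoid_add \<Rightarrow>\<^sub>0 'a::comm_ring_1))"
  by (simp add: Cst_def)

lemma lookup_Cst_mult:
  "Poly_Mapping.lookup (Cst c * q) x = c * Poly_Mapping.lookup (q :: ('m::monoid_add \<Rightarrow>\<^sub>0 'a::comm_ring_1)) x"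
proof -
  have "Cst c * q = Poly_Mapping.map ((*) c) q" by (simp add: Cst_def mult_map_scale_conv_mult)
  then show ?thesis by (simp add: map.rep_eq when_def)
qed

lemma sum_single_lookup_keys:
  "(\<Sum>k\<in>Poly_Mapping.keys p. Poly_Mapping.single k (Poly_Mapping.lookup p k)) = p"
  by (rule poly_mapping_eqI) (simp add: lookup_sum lookup_single when_def in_keys_iff)

lemma conv_app_single:
  "conv_app T S (Poly_Mapping.single ab c)
     = Cst c * T (Poly_Mapping.single (fst ab) 1) * S (Poly_Mapping.single (snd ab) 1)"
  by (cases "c = 0") (simp_all add: conv_app_def)

lemma conv_app_add: "conv_app T S (q1 + q2) = conv_app T S q1 + conv_app T S q2"
  unfolding conv_app_def
  by (rule setsum_keys_plus_distrib) (simp_all add: Cst_add algebra_simps)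

lemma conv_app_0: "conv_app T S 0 = 0"
  by (simp add: conv_app_def)

lemma conv_app_sum: "conv_app T S (\<Sum>i\<in>I. f i) = (\<Sum>i\<in>I. conv_app T S (f i))"
  by (induction I rule: infinite_finite_induct) (simp_all add: conv_app_0 conv_app_add)

lemma conv_app_Cst_mult: "conv_app T S (Cst c * q) = Cst c * conv_app T S q"
proof -
  have expand: "conv_app T S q
      = (\<Sum>ab\<in>Poly_Mapping.keys q. conv_app T S (Poly_Mapping.single ab (Poly_Mapping.lookup q ab)))"
    for q
    unfolding conv_app_single by (simp add: conv_app_def)
  have "Cst c * q = (\<Sum>ab\<in>Poly_Mapping.keys q. Poly_Mapping.single ab (c * Poly_Mapping.lookup q ab))"
    by (rule poly_mapping_eqI) (simp add: lookup_Cst_mult lookup_sum lookup_single when_def in_keys_iff)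
  then have "conv_app T S (Cst c * q)
      = (\<Sum>ab\<in>Poly_Mapping.keys q. conv_app T S (Poly_Mapping.single ab (c * Poly_Mapping.lookup q ab)))"
    by (simp add: conv_app_sum)
  also have "\<dots> = Cst c * (\<Sum>ab\<in>Poly_Mapping.keys q.
      conv_app T S (Poly_Mapping.single ab (Poly_Mapping.lookup q ab)))"
    by (simp add: conv_app_single sum_distrib_left Cst_mult[symmetric] algebra_simps)
  also have "\<dots> = Cst c * conv_app T S q"
    by (simp only: expand[symmetric])
  finally show ?thesis .
qed

lemma is_linear_NE_expand:
  assumes "is_linear_NE S" and "finite K" and "Poly_Mapping.keys p \<subseteq> K"
  shows "S p = (\<Sum>m\<in>K. Cst (Poly_Mapping.lookup p m) * S (Poly_Mapping.single m 1))"
proof -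
  have "S p = (\<Sum>m\<in>Poly_Mapping.keys p. Cst (Poly_Mapping.lookup p m) * S (Poly_Mapping.single m 1))"
    using assms(1) unfolding is_linear_NE_def by blast
  also have "\<dots> = (\<Sum>m\<in>K. Cst (Poly_Mapping.lookup p m) * S (Poly_Mapping.single m 1))"
    by (rule sum.mono_neutral_left) (use assms in \<open>auto simp: in_keys_iff\<close>)
  finally show ?thesis .
qed

lemma is_linear_NE_Cst_mult:
  assumes "is_linear_NE S"
  shows "S (Cst c * p) = Cst c * S p"
proof -
  have "Poly_Mapping.keys (Cst c * p) \<subseteq> Poly_Mapping.keys p"
    by (auto simp: in_keys_iff lookup_Cst_mult)
  then have "S (Cst c * p) = (\<Sum>m\<in>Poly_Mapping.keys p.
      Cst (Poly_Mapping.lookup (Cst c * p) m) * S (Poly_Mapping.single m 1))"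
    by (rule is_linear_NE_expand[OF assms finite_keys])
  also have "\<dots> = Cst c * (\<Sum>m\<in>Poly_Mapping.keys p.
      Cst (Poly_Mapping.lookup p m) * S (Poly_Mapping.single m 1))"
    by (simp only: lookup_Cst_mult Cst_mult[symmetric] sum_distrib_left mult.assoc)
  also have "\<dots> = Cst c * S p"
    by (simp only: is_linear_NE_expand[OF assms finite_keys subset_refl, symmetric])
  finally show ?thesis .
qed

lemma conv_app_id_tens:
  assumes "is_linear_NE S"
  shows "conv_app id S (tens p q) = p * S q"
proof -
  have single: "Cst (x * y) * Poly_Mapping.single a 1 = Poly_Mapping.single a x * Cst y"
    for x y :: 'a and a :: "nat \<Rightarrow>\<^sub>0 nat"
    by (simp add: Cst_def mult_single)
  have "conv_app id S (tens p q)
      = (\<Sum>a\<in>Poly_Mapping.keys p. \<Sum>b\<in>Poly_Mapping.keys q.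
           Cst (Poly_Mapping.lookup p a * Poly_Mapping.lookup q b) * Poly_Mapping.single a 1
           * S (Poly_Mapping.single b 1))"
    by (simp add: tens_def conv_app_sum conv_app_single)
  also have "\<dots> = (\<Sum>a\<in>Poly_Mapping.keys p. Poly_Mapping.single a (Poly_Mapping.lookup p a))
      * (\<Sum>b\<in>Poly_Mapping.keys q. Cst (Poly_Mapping.lookup q b) * S (Poly_Mapping.single b 1))"
    unfolding sum_product by (intro sum.cong refl) (simp only: single mult.assoc)
  also have "\<dots> = p * S q"
    by (simp only: sum_single_lookup_keys is_linear_NE_expand[OF assms finite_keys subset_refl, symmetric])
  finally show ?thesis .
qed

lemma antipode_1:
  assumes "is_antipode (S :: 'a::field_char_0 NE \<Rightarrow> 'a NE)"
  shows "S 1 = 1"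
proof -
  have "conv_app id S (Delta 1) = Cst (counit 1)"
    using assms unfolding is_antipode_def by blast
  moreover have "Delta (1 :: 'a NE) = Poly_Mapping.single 0 1"
    by (simp add: Delta_def)
  ultimately show ?thesis
    by (simp add: conv_app_single zero_prod_def counit_def Cst_def)
qed

lemma Delta_tgen:
  assumes "2 \<le> m"
  shows "Delta (tgen m :: 'a::field_char_0 NE) = Delta_gen m"
proof -
  have "Suc (Suc (m - 2)) = m" using assms by arith
  then show ?thesis using assms by (simp add: Delta_def tgen_def)
qed

lemma counit_tgen:
  assumes "2 \<le> m"
  shows "counit (tgen m :: 'a::field_char_0 NE) = 0"
proof -
  have "Poly_Mapping.single (m - 2) (1::nat) \<noteq> 0" by (simp add: single_eq_0_iff)
  then show ?thesis using assms by (simp add: counit_def tgen_def lookup_single when_def)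
qed

text \<open>The identity \<open>\<mu>(id \<otimes> S)\<Delta>(t\<^sub>m) = \<epsilon>(t\<^sub>m) = 0\<close>, written out with the coproduct formula.\<close>

lemma antipode_recurrence:
  assumes anti: "is_antipode (S :: 'a::field_char_0 NE \<Rightarrow> 'a NE)" and m: "2 \<le> m"
  shows "(\<Sum>k=1..m. bell_partial m k (\<lambda>j. of_nat j * tgen j) * of_nat k * S (tgen k)) = 0"
proof -
  have lin: "is_linear_NE S"
    using anti unfolding is_antipode_def by blast
  have "Cst (1 / of_nat m) * (\<Sum>k=1..m. bell_partial m k (\<lambda>j. Cst (of_nat j) * tgen j)
          * (Cst (of_nat k) * S (tgen k))) = conv_app id S (Delta (tgen m))"
    by (simp only: Delta_tgen[OF m] Delta_gen_def conv_app_Cst_mult conv_app_sum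
        conv_app_id_tens[OF lin] is_linear_NE_Cst_mult[OF lin])
  also have "\<dots> = 0"
    using anti unfolding is_antipode_def by (simp add: counit_tgen[OF m])
  finally show ?thesis using m by (simp add: Cst_of_nat Cst_eq_0_iff mult.assoc)
qed

lemma Fser_eq_fps_shift_EI: "Fser = fps_shift 1 (EI :: 'a::field_char_0 NE fps)"
proof (rule fps_ext)
  fix j
  have "(of_nat (Suc j) / fact (Suc j) :: 'a) = 1 / fact j"
    by (simp add: divide_simps del: of_nat_Suc)
  then show "fps_nth Fser j = fps_nth (fps_shift 1 (EI :: 'a NE fps)) j"
    by (cases j) (simp_all add: Fser_def EI_def)
qed

lemma Cst_inverse_fact_mult_fact: "Cst (1 / fact m) * of_nat (fact m) = (1 :: 'a::field_char_0 NE)"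
proof -
  have "(1 / fact m * of_nat (fact m) :: 'a) = 1" by (simp add: of_nat_fact)
  then show ?thesis by (simp only: Cst_of_nat[symmetric] Cst_mult Cst_1)
qed

interpretation NE: factorials_invertible "\<lambda>m. Cst (1 / fact m) :: 'a::field_char_0 NE"
  by unfold_locales (rule Cst_inverse_fact_mult_fact)

lemma EI_eq_egf: "EI = NE.egf (\<lambda>j. of_nat j * tgen j :: 'a::field_char_0 NE)"
proof (rule fps_ext)
  fix j
  have "Cst (of_nat j / fact j) = Cst (1 / fact j) * (of_nat j :: 'a NE)"
    by (simp add: Cst_of_nat[symmetric] Cst_mult)
  then show "fps_nth EI j = fps_nth (NE.egf (\<lambda>j. of_nat j * tgen j :: 'a NE)) j"
    by (auto simp: EI_def NE.egf_def tgen_def mult.assoc)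
qed

theorem mainTheorem6:
  fixes S :: "'a::field_char_0 NE \<Rightarrow> 'a NE" and n :: nat
  assumes "is_antipode S" and "2 \<le> n"
  shows "of_nat n * S (tgen n) =
           (\<Sum>k = 1..n - 1. (-1) ^ k * of_nat (ffall (n + k - 1) k)
                               * bell_partial (n - 1) k (\<lambda>j. tgen (j + 1)))
       \<and> (\<exists>G. G * Fser ^ n = 1 \<and> of_nat n * S (tgen n) = fact (n - 1) * fps_nth G (n - 1))
       \<and> (\<exists>G. G * (fps_shift 1 EI) ^ n = 1 \<and> of_nat n * S (tgen n) = fact (n - 1) * fps_nth G (n - 1))"
proof -
  have t1: "tgen 1 = (1 :: 'a NE)" by (simp add: tgen_def)
  define u where "u = NE.egf (\<lambda>j. tgen (j + 1) :: 'a NE)"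
  have F: "fps_shift 1 EI = 1 + u"
    unfolding EI_eq_egf u_def NE.fps_shift_egf_of_nat_mult t1 by simp
  define G where "G = neg_binomial_fps n oo u"
  have GF: "G * fps_shift 1 EI ^ n = 1"
    unfolding G_def F by (rule neg_binomial_fps_compose_mult_power) (simp add: u_def NE.egf_def)
  moreover have "0 < n" using assms(2) by simp
  ultimately obtain V where "V * fps_shift 1 EI = 1" and "V ^ n = G"
    by (rule power_inverse_root)
  then have "of_nat n * S (tgen n) = of_nat (fact (n - 1)) * fps_nth G (n - 1)"
    using NE.lagrange_inversion_egf[of tgen "\<lambda>k. S (tgen k)" V n] t1 antipode_1[OF assms(1)]
      antipode_recurrence[OF assms(1)] assms(2) by (simp add: EI_eq_egf)
  moreover have "of_nat (fact (n - 1)) * fps_nth G (n - 1)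
      = (\<Sum>k = 1..n - 1. (-1) ^ k * of_nat (ffall (n + k - 1) k) * bell_partial (n - 1) k (\<lambda>j. tgen (j + 1)))"
    unfolding G_def u_def using assms(2) by (intro NE.fact_mult_neg_binomial_compose_egf_nth) simp
  ultimately show ?thesis
    using GF by (auto simp: Fser_eq_fps_shift_EI of_nat_fact)
qed

end
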